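(* Let $(p_D)_{D\in\mathcal{I}}$ be a probability distribution on $\mathcal{I}$ and for $\mathbf{Q}\in B(\mathcal{L})$ define $$p^M(\mathbf{Q})=-\log\left(\max_{D\in\mathcal{I}}p_D\right)+\log\left(\sum_{E}\max_{D:\mathbf{Q}(D)=E}p_D\right),$$ where $E$ ranges over $\{\mathbf{Q}(D):D\in\mathcal{I}\}$. Then $p^M$ has no information arbitrage: whenever $\mathbf{Q}_2\twoheadrightarrow\mathbf{Q}_1$, we have $p^M(\mathbf{Q}_2)\ge p^M(\mathbf{Q}_1)$.
   Context: $\mathcal{I}$ is a countable nonempty set of database instances; queries are deterministic functions on $\mathcal{I}$; a query bundle is a finite tuple of queries from a language $\mathcal{L}$, evaluated componentwise; $B(\mathcal{L})$ is the set of bundles. $\mathbf{Q}_2\twoheadrightarrow\mathbf{Q}_1$ means: for all $D',D''\in\mathcal{I}$, $\mathbf{Q}_2(D')=\mathbf{Q}_2(D'')$ implies $\mathbf{Q}_1(D')=\mathbf{Q}_1(D'')$. ($p^M$ equals $H_\infty(X)-H_\infty(X\mid\mathbf{Q}(X))$ for min-entropy $H_\infty$ and $X$ distributed according to $p_D$.) *)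

theory Defs
  imports "HOL-Analysis.Analysis"
begin

type_synonym ('db, 'v) query = "'db \<Rightarrow> 'v"

definition bundles :: "('db, 'v) query set \<Rightarrow> ('db, 'v) query list set" where
  "bundles L = lists L"

definition bundle_eval :: "('db, 'v) query list \<Rightarrow> 'db \<Rightarrow> 'v list" where
  "bundle_eval Qs D = map (\<lambda>q. q D) Qs"

definition determines :: "'db set \<Rightarrow> ('db, 'v) query list \<Rightarrow> ('db, 'v) query list \<Rightarrow> bool" where
  "determines I Q2 Q1 \<longleftrightarrow>
     (\<forall>D'\<in>I. \<forall>D''\<in>I. bundle_eval Q2 D' = bundle_eval Q2 D'' \<longrightarrow> bundle_eval Q1 D' = bundle_eval Q1 D'')"

text \<open>The maxima are written as suprema (they are attained for a probability distribution
on a countable set); the sum over the countable set of outputs is an infinite sum.\<close>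
definition pM :: "'db set \<Rightarrow> ('db \<Rightarrow> real) \<Rightarrow> ('db, 'v) query list \<Rightarrow> real" where
  "pM I p Qs =
     - log 2 (SUP D\<in>I. p D)
     + log 2 (\<Sum>\<^sub>\<infinity>E \<in> bundle_eval Qs ` I. (SUP D\<in>{D\<in>I. bundle_eval Qs D = E}. p D))"

end

theory Submission
  imports Defs
begin

text \<open>For a probability distribution every fibre of a query attains its maximum (only finitely
many points have probability above any positive threshold), so the sum of fibre maxima is the
total probability of a set of representatives, one maximiser per output. If \<open>Q\<^sub>2\<close> determines
\<open>Q\<^sub>1\<close>, sending the \<open>Q\<^sub>1\<close>-representative of a point to the \<open>Q\<^sub>2\<close>-representative of its
\<open>Q\<^sub>2\<close>-fibre is injective and does not decrease probability, so the sum of fibre maxima can only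
grow, and with it \<open>p\<^sup>M\<close>.\<close>

lemma infsum_le_infsum_inj_dominating:
  fixes p :: "'a \<Rightarrow> real"
  assumes "p summable_on B" and "\<And>x. x \<in> B \<Longrightarrow> 0 \<le> p x"
    and "inj_on h A" and "h ` A \<subseteq> B" and "\<And>x. x \<in> A \<Longrightarrow> p x \<le> p (h x)"
    and "p summable_on A"
  shows "infsum p A \<le> infsum p B"
proof -
  have summable_image: "p summable_on h ` A"
    using assms(1,4) summable_on_subset_banach by blast
  have "infsum p A \<le> infsum (p \<circ> h) A"
    using assms(3,5,6) summable_image by (intro infsum_mono) (auto simp: summable_on_reindex)
  also have "\<dots> = infsum p (h ` A)"
    using assms(3) by (simp add: infsum_reindex)
  also have "\<dots> \<le> infsum p B"
    using assms(1,2,4) summable_image by (intro infsum_mono2) auto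
  finally show ?thesis .
qed

definition fiber_max_sum :: "'a set \<Rightarrow> ('a \<Rightarrow> real) \<Rightarrow> ('a \<Rightarrow> 'b) \<Rightarrow> real" where
  "fiber_max_sum I p f = (\<Sum>\<^sub>\<infinity>E \<in> f ` I. (SUP D\<in>{D\<in>I. f D = E}. p D))"

lemma pM_eq_fiber_max_sum:
  "pM I p Qs = - log 2 (SUP D\<in>I. p D) + log 2 (fiber_max_sum I p (bundle_eval Qs))"
  by (simp add: pM_def fiber_max_sum_def)

definition fiber_maximizers :: "'a set \<Rightarrow> ('a \<Rightarrow> real) \<Rightarrow> ('a \<Rightarrow> 'b) \<Rightarrow> ('b \<Rightarrow> 'a) \<Rightarrow> bool" where
  "fiber_maximizers I p f r \<longleftrightarrow>
     (\<forall>x\<in>I. r (f x) \<in> I \<and> f (r (f x)) = f x \<and> (\<forall>y\<in>I. f y = f x \<longrightarrow> p y \<le> p (r (f x))))"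

lemma fiber_maximizersD:
  assumes "fiber_maximizers I p f r" and "x \<in> I"
  shows "r (f x) \<in> I" and "f (r (f x)) = f x"
    and "\<And>y. y \<in> I \<Longrightarrow> f y = f x \<Longrightarrow> p y \<le> p (r (f x))"
  using assms unfolding fiber_maximizers_def by auto

lemma fiber_maximizers_image_subset:
  assumes "fiber_maximizers I p f r"
  shows "r ` f ` I \<subseteq> I"
  using fiber_maximizersD(1)[OF assms] by blast

context
  fixes I :: "'a set" and p :: "'a \<Rightarrow> real"
  assumes nonneg: "\<And>x. x \<in> I \<Longrightarrow> 0 \<le> p x" and summable: "p summable_on I"
begin

lemma finite_level_set:
  assumes "c > 0"
  shows "finite {x\<in>I. c \<le> p x}"
proof (rule ccontr)
  assume "infinite {x\<in>I. c \<le> p x}"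
  obtain n :: nat where n: "infsum p I / c < real n"
    using reals_Archimedean2 by blast
  obtain B where B: "finite B" "card B = n" "B \<subseteq> {x\<in>I. c \<le> p x}"
    using infinite_arbitrarily_large[OF \<open>infinite _\<close>] by blast
  have "real n * c = (\<Sum>x\<in>B. c)"
    using B(2) by simp
  also have "\<dots> \<le> sum p B"
    using B(3) by (intro sum_mono) auto
  also have "\<dots> \<le> infsum p I"
    using B nonneg summable by (intro finite_sum_le_infsum) auto
  finally show False
    using n assms by (simp add: field_simps)
qed

lemma summable_attains_max:
  assumes "F \<subseteq> I" and "F \<noteq> {}"
  shows "\<exists>d\<in>F. \<forall>x\<in>F. p x \<le> p d"
proof (cases "\<exists>x\<in>F. p x > 0")
  case False
  with assms nonneg show ?thesis
    by (metis equals0I not_less order_antisym subsetD)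
next
  case True
  then obtain x0 where x0: "x0 \<in> F" "p x0 > 0" by blast
  let ?S = "{x\<in>F. p x0 \<le> p x}"
  have "finite ?S"
    using finite_level_set[OF x0(2)] by (rule rev_finite_subset) (use assms(1) in auto)
  moreover have "x0 \<in> ?S"
    using x0 by simp
  ultimately obtain d where d: "d \<in> ?S" "p d = Max (p ` ?S)"
    using Max_in[of "p ` ?S"] by fastforce
  have max_on_S: "p x \<le> p d" if "x \<in> ?S" for x
    using that d(2) \<open>finite ?S\<close> by simp
  have "p x \<le> p d" if "x \<in> F" for x
    using that d(1) max_on_S by (cases "p x0 \<le> p x") auto
  with d show ?thesis by blast
qed

lemma ex_fiber_maximizers: "\<exists>r. fiber_maximizers I p f r"
proof -
  have ex_max: "\<exists>d. d \<in> {D\<in>I. f D = E} \<and> (\<forall>y\<in>{D\<in>I. f D = E}. p y \<le> p d)"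
    if "E \<in> f ` I" for E
  proof -
    have "{D\<in>I. f D = E} \<noteq> {}"
      using that by blast
    then show ?thesis
      using summable_attains_max[of "{D\<in>I. f D = E}"] by blast
  qed
  define r where "r E = (SOME d. d \<in> {D\<in>I. f D = E} \<and> (\<forall>y\<in>{D\<in>I. f D = E}. p y \<le> p d))"
    for E
  have "r E \<in> {D\<in>I. f D = E} \<and> (\<forall>y\<in>{D\<in>I. f D = E}. p y \<le> p (r E))" if "E \<in> f ` I" for E
    unfolding r_def by (rule someI_ex[OF ex_max[OF that]])
  then have "fiber_maximizers I p f r"
    unfolding fiber_maximizers_def by auto
  then show ?thesis
    by blast
qed

lemma fiber_max_sum_eq_infsum_maximizers:
  assumes r: "fiber_maximizers I p f r"
  shows "fiber_max_sum I p f = infsum p (r ` f ` I)"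
proof -
  have "(SUP D\<in>{D\<in>I. f D = E}. p D) = p (r E)" if "E \<in> f ` I" for E
    using that fiber_maximizersD[OF r] by (intro cSup_eq_maximum) auto
  then have "fiber_max_sum I p f = (\<Sum>\<^sub>\<infinity>E \<in> f ` I. p (r E))"
    unfolding fiber_max_sum_def by (rule infsum_cong)
  also have "\<dots> = infsum p (r ` f ` I)"
  proof -
    have "inj_on r (f ` I)"
    proof (rule inj_onI)
      fix E E' assume "E \<in> f ` I" "E' \<in> f ` I" and "r E = r E'"
      then obtain x x' where "x \<in> I" "E = f x" "x' \<in> I" "E' = f x'"
        by blast
      then show "E = E'"
        using \<open>r E = r E'\<close> fiber_maximizersD(2)[OF r] by metis
    qed
    then show ?thesis
      by (simp add: infsum_reindex o_def)
  qed
  finally show ?thesis .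
qed

lemma fiber_max_sum_mono:
  fixes f :: "'a \<Rightarrow> 'b" and g :: "'a \<Rightarrow> 'c"
  assumes g_determines_f: "\<And>x y. x \<in> I \<Longrightarrow> y \<in> I \<Longrightarrow> g x = g y \<Longrightarrow> f x = f y"
  shows "fiber_max_sum I p f \<le> fiber_max_sum I p g"
proof -
  obtain r s where r: "fiber_maximizers I p f r" and s: "fiber_maximizers I p g s"
    using ex_fiber_maximizers by meson
  note r_in = fiber_maximizers_image_subset[OF r] and s_in = fiber_maximizers_image_subset[OF s]
  have inj: "inj_on (s \<circ> g) (r ` f ` I)"
  proof (rule inj_onI)
    fix x y assume "x \<in> r ` f ` I" "y \<in> r ` f ` I" and s_eq: "(s \<circ> g) x = (s \<circ> g) y"
    then obtain x' y' where x': "x' \<in> I" "x = r (f x')" and y': "y' \<in> I" "y = r (f y')"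
      by blast
    have "x \<in> I" "y \<in> I"
      using x' y' fiber_maximizersD(1)[OF r] by auto
    have "g x = g (s (g x))"
      using fiber_maximizersD(2)[OF s \<open>x \<in> I\<close>] by simp
    also have "\<dots> = g (s (g y))"
      using s_eq by simp
    also have "\<dots> = g y"
      using fiber_maximizersD(2)[OF s \<open>y \<in> I\<close>] .
    finally have "f x = f y"
      using g_determines_f \<open>x \<in> I\<close> \<open>y \<in> I\<close> by blast
    moreover have "f x = f x'" "f y = f y'"
      using x' y' fiber_maximizersD(2)[OF r] by simp_all
    ultimately show "x = y"
      using x' y' by simp
  qed
  have "infsum p (r ` f ` I) \<le> infsum p (s ` g ` I)"
  proof (rule infsum_le_infsum_inj_dominating[OF _ _ inj])
    show "p summable_on s ` g ` I" "p summable_on r ` f ` I"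
      using summable_on_subset_banach[OF summable] r_in s_in by auto
    show "(s \<circ> g) ` r ` f ` I \<subseteq> s ` g ` I"
      using r_in by (auto simp: image_comp[symmetric] intro: image_mono)
    show "p x \<le> p ((s \<circ> g) x)" if "x \<in> r ` f ` I" for x
      using that r_in fiber_maximizersD(3)[OF s] by auto
    show "0 \<le> p x" if "x \<in> s ` g ` I" for x
      using that s_in nonneg by auto
  qed
  then show ?thesis
    using fiber_max_sum_eq_infsum_maximizers[OF r] fiber_max_sum_eq_infsum_maximizers[OF s] by simp
qed

lemma fiber_max_sum_pos:
  assumes "x \<in> I" and "p x > 0"
  shows "fiber_max_sum I p f > 0"
proof -
  obtain r where r: "fiber_maximizers I p f r"
    using ex_fiber_maximizers by blast
  note r_in = fiber_maximizers_image_subset[OF r]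
  have "p (r (f x)) > 0"
    using fiber_maximizersD(3)[OF r assms(1) assms(1)] assms(2) by simp
  then have "\<not> infsum p (r ` f ` I) \<le> 0"
    using nonneg_infsum_le_0D[of p "r ` f ` I" "r (f x)"] summable_on_subset_banach[OF summable r_in]
      r_in nonneg assms(1) by auto
  then show ?thesis
    using fiber_max_sum_eq_infsum_maximizers[OF r] by simp
qed

end

theorem lemma20:
  fixes I :: "'db set" and p :: "'db \<Rightarrow> real"
    and L :: "('db, 'v) query set" and Q1 Q2 :: "('db, 'v) query list"
  assumes "countable I" and "I \<noteq> {}"
    and "\<forall>D\<in>I. p D \<ge> 0" and "(p has_sum 1) I"
    and "Q1 \<in> bundles L" and "Q2 \<in> bundles L"
    and "determines I Q2 Q1"
  shows "pM I p Q2 \<ge> pM I p Q1"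
proof -
  have nonneg: "\<And>D. D \<in> I \<Longrightarrow> 0 \<le> p D" and summable: "p summable_on I"
    using assms(3,4) by (auto simp: summable_on_def)
  obtain D where D: "D \<in> I" "p D > 0"
  proof (rule ccontr)
    assume "\<not> thesis"
    with that nonneg have "\<And>D. D \<in> I \<Longrightarrow> p D = 0"
      by (meson not_less order_antisym)
    then have "(p has_sum 0) I"
      by (simp add: has_sum_0)
    with assms(4) show False
      using has_sum_unique by (metis zero_neq_one)
  qed
  have "fiber_max_sum I p (bundle_eval Q1) \<le> fiber_max_sum I p (bundle_eval Q2)"
  proof (rule fiber_max_sum_mono[OF nonneg summable])
    show "bundle_eval Q1 D' = bundle_eval Q1 D''"
      if "D' \<in> I" "D'' \<in> I" "bundle_eval Q2 D' = bundle_eval Q2 D''" for D' D''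
      using assms(7) that unfolding determines_def by blast
  qed
  moreover have "fiber_max_sum I p (bundle_eval Q1) > 0"
    using fiber_max_sum_pos[OF nonneg summable D] .
  ultimately show ?thesis
    unfolding pM_eq_fiber_max_sum by simp
qed

end
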